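(* Let $G=(V,E)$ be a locally finite, connected, infinite graph and fix $x\in V$. Then $p''_{\mathrm{cut,E}}\le p''_{\mathrm{cut,V}}$.
   Context: Consider Bernoulli$(p)$ bond percolation on $G$ (each edge open independently with probability $p$), with law $\mathbb{P}_p$. For $K\subset V$: the outer vertex boundary is $\partial_V K=\{z\notin K:\exists y\in K,\ y\sim z\}$ and the edge boundary is $\Delta K=\{(y,z)\in E:y\in K,z\notin K\}$. Let $\mathscr{B}_E=\{\Delta S: S\text{ is the vertex set of a finite connected subgraph containing }x\}$ and $\mathscr{B}_V=\{\partial_V S: S\text{ is the vertex set of a finite connected subgraph containing }x\}$. For $\Pi\in\mathscr{B}_V$ and $v\in\Pi$, $A(x,v,\Pi)$ is the event that $x$ is connected to $v$ by an open path using no vertex of $\Pi\setminus\{v\}$; for $\Pi_E\in\mathscr{B}_E$ and $e\in\Pi_E$, $A(x,e,\Pi_E)$ is the event that $e$ is open and $x$ is connected to $e$ by an open path using no edge of $\Pi_E\setminus\{e\}$. Define $p''_{\mathrm{cut,V}}=\sup\{p\ge0:\inf_{\Pi\in\mathscr{B}_V}\sum_{v\in\Pi}\mathbb{P}_p[A(x,v,\Pi)]=0\}$ and $p''_{\mathrm{cut,E}}=\sup\{p\ge0:\inf_{\Pi_E\in\mathscr{B}_E}\sum_{e\in\Pi_E}\mathbb{P}_p[A(x,e,\Pi_E)]=0\}$. *)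

theory Defs
  imports "HOL-Probability.Probability"
begin

text \<open>Graph: vertex set = UNIV of type 'a, adjacency relation adj (simple undirected graph).
  Undirected edges are represented as two-element sets {u,v}.\<close>

definition edges :: "('a \<Rightarrow> 'a \<Rightarrow> bool) \<Rightarrow> 'a set set" where
  "edges adj = {{u, v} | u v. adj u v}"

definition locally_finite :: "('a \<Rightarrow> 'a \<Rightarrow> bool) \<Rightarrow> bool" where
  "locally_finite adj \<longleftrightarrow> (\<forall>x. finite {y. adj x y})"

definition graph_connected :: "('a \<Rightarrow> 'a \<Rightarrow> bool) \<Rightarrow> bool" where
  "graph_connected adj \<longleftrightarrow> (\<forall>u v. adj\<^sup>*\<^sup>* u v)"

definition connected_vset :: "('a \<Rightarrow> 'a \<Rightarrow> bool) \<Rightarrow> 'a set \<Rightarrow> bool" where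
  "connected_vset adj S \<longleftrightarrow>
     (\<forall>u\<in>S. \<forall>v\<in>S. (\<lambda>a b. adj a b \<and> a \<in> S \<and> b \<in> S)\<^sup>*\<^sup>* u v)"

definition perc :: "('a \<Rightarrow> 'a \<Rightarrow> bool) \<Rightarrow> real \<Rightarrow> ('a set \<Rightarrow> bool) measure" where
  "perc adj p = PiM (edges adj) (\<lambda>_. measure_pmf (bernoulli_pmf p))"

definition Prob_p :: "('a \<Rightarrow> 'a \<Rightarrow> bool) \<Rightarrow> real \<Rightarrow> (('a set \<Rightarrow> bool) \<Rightarrow> bool) \<Rightarrow> real" where
  "Prob_p adj p A = measure (perc adj p) {\<omega> \<in> space (perc adj p). A \<omega>}"

definition outer_vboundary :: "('a \<Rightarrow> 'a \<Rightarrow> bool) \<Rightarrow> 'a set \<Rightarrow> 'a set" where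
  "outer_vboundary adj K = {z. z \<notin> K \<and> (\<exists>y\<in>K. adj y z)}"

definition edge_boundary :: "('a \<Rightarrow> 'a \<Rightarrow> bool) \<Rightarrow> 'a set \<Rightarrow> 'a set set" where
  "edge_boundary adj K = {{y, z} | y z. adj y z \<and> y \<in> K \<and> z \<notin> K}"

definition finite_conn_sets :: "('a \<Rightarrow> 'a \<Rightarrow> bool) \<Rightarrow> 'a \<Rightarrow> 'a set set" where
  "finite_conn_sets adj x = {S. finite S \<and> x \<in> S \<and> connected_vset adj S}"

definition cutsets_E :: "('a \<Rightarrow> 'a \<Rightarrow> bool) \<Rightarrow> 'a \<Rightarrow> 'a set set set" where
  "cutsets_E adj x = edge_boundary adj ` finite_conn_sets adj x"

definition cutsets_V :: "('a \<Rightarrow> 'a \<Rightarrow> bool) \<Rightarrow> 'a \<Rightarrow> 'a set set" where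
  "cutsets_V adj x = outer_vboundary adj ` finite_conn_sets adj x"

definition open_conn_avoid_V ::
  "('a \<Rightarrow> 'a \<Rightarrow> bool) \<Rightarrow> ('a set \<Rightarrow> bool) \<Rightarrow> 'a set \<Rightarrow> 'a \<Rightarrow> 'a \<Rightarrow> bool" where
  "open_conn_avoid_V adj \<omega> W a b \<longleftrightarrow> a \<notin> W \<and>
     (\<lambda>u w. adj u w \<and> \<omega> {u, w} \<and> u \<notin> W \<and> w \<notin> W)\<^sup>*\<^sup>* a b"

definition open_conn_avoid_E ::
  "('a \<Rightarrow> 'a \<Rightarrow> bool) \<Rightarrow> ('a set \<Rightarrow> bool) \<Rightarrow> 'a set set \<Rightarrow> 'a \<Rightarrow> 'a \<Rightarrow> bool" where
  "open_conn_avoid_E adj \<omega> F a b \<longleftrightarrow>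
     (\<lambda>u w. adj u w \<and> \<omega> {u, w} \<and> {u, w} \<notin> F)\<^sup>*\<^sup>* a b"

definition A_V :: "('a \<Rightarrow> 'a \<Rightarrow> bool) \<Rightarrow> 'a \<Rightarrow> 'a \<Rightarrow> 'a set \<Rightarrow> ('a set \<Rightarrow> bool) \<Rightarrow> bool" where
  "A_V adj x v CV \<omega> \<longleftrightarrow> open_conn_avoid_V adj \<omega> (CV - {v}) x v"

definition A_E :: "('a \<Rightarrow> 'a \<Rightarrow> bool) \<Rightarrow> 'a \<Rightarrow> 'a set \<Rightarrow> 'a set set \<Rightarrow> ('a set \<Rightarrow> bool) \<Rightarrow> bool" where
  "A_E adj x e CE \<omega> \<longleftrightarrow> \<omega> e \<and> (\<exists>y\<in>e. open_conn_avoid_E adj \<omega> (CE - {e}) x y)"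

definition p_cut_V :: "('a \<Rightarrow> 'a \<Rightarrow> bool) \<Rightarrow> 'a \<Rightarrow> real" where
  "p_cut_V adj x = Sup {p. p \<ge> 0 \<and>
      (INF CV\<in>cutsets_V adj x. \<Sum>v\<in>CV. Prob_p adj p (A_V adj x v CV)) = 0}"

definition p_cut_E :: "('a \<Rightarrow> 'a \<Rightarrow> bool) \<Rightarrow> 'a \<Rightarrow> real" where
  "p_cut_E adj x = Sup {p. p \<ge> 0 \<and>
      (INF CE\<in>cutsets_E adj x. \<Sum>e\<in>CE. Prob_p adj p (A_E adj x e CE)) = 0}"

end

theory Submission
  imports Defs
begin

text \<open>
  An open path from \<open>x\<close> to a vertex \<open>v\<close> of \<open>\<partial>\<^sub>V S\<close> avoiding the rest of \<open>\<partial>\<^sub>V S\<close> runs inside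
  \<open>S\<close> until it first leaves \<open>S\<close>, which it can only do through an open edge \<open>{y, v}\<close> of \<open>\<Delta>S\<close>;
  the part of the path inside \<open>S\<close> uses no edge of \<open>\<Delta>S\<close>.  Hence \<open>A(x, v, \<partial>\<^sub>V S)\<close> is covered by
  the events \<open>A(x, e, \<Delta>S)\<close> with \<open>v \<in> e\<close>, and since every \<open>e \<in> \<Delta>S\<close> contains exactly one vertex
  of \<open>\<partial>\<^sub>V S\<close>, a union bound gives that the vertex sum over \<open>\<partial>\<^sub>V S\<close> is at most the edge sum
  over \<open>\<Delta>S\<close>.  So every \<open>p\<close> in the set defining \<open>p''\<^sub>c\<^sub>u\<^sub>t\<^sub>,\<^sub>E\<close> lies in the set defining
  \<open>p''\<^sub>c\<^sub>u\<^sub>t\<^sub>,\<^sub>V\<close>.  Comparing the suprema needs the first set to be nonempty (it contains \<open>0\<close>)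
  and the second to be bounded: for \<open>p \<ge> 1\<close> all edges are open, and as the graph is infinite
  and connected some \<open>A(x, v, \<partial>\<^sub>V S)\<close> is almost sure.
\<close>

definition cutset_sum_V :: "('a \<Rightarrow> 'a \<Rightarrow> bool) \<Rightarrow> 'a \<Rightarrow> real \<Rightarrow> 'a set \<Rightarrow> real" where
  "cutset_sum_V adj x p CV = (\<Sum>v\<in>CV. Prob_p adj p (A_V adj x v CV))"

definition cutset_sum_E :: "('a \<Rightarrow> 'a \<Rightarrow> bool) \<Rightarrow> 'a \<Rightarrow> real \<Rightarrow> 'a set set \<Rightarrow> real" where
  "cutset_sum_E adj x p CE = (\<Sum>e\<in>CE. Prob_p adj p (A_E adj x e CE))"

lemma edge_boundary_subset_edges: "edge_boundary adj S \<subseteq> edges adj"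
  by (auto simp: edge_boundary_def edges_def)

lemma finite_boundaries:
  assumes "locally_finite adj" and "finite S"
  shows finite_outer_vboundary: "finite (outer_vboundary adj S)"
    and finite_edge_boundary: "finite (edge_boundary adj S)"
proof -
  have fin: "finite (SIGMA y:S. {z. adj y z})"
    using assms by (intro finite_SigmaI) (auto simp: locally_finite_def)
  have "outer_vboundary adj S \<subseteq> snd ` (SIGMA y:S. {z. adj y z})"
    by (force simp: outer_vboundary_def)
  then show "finite (outer_vboundary adj S)"
    using fin finite_subset by blast
  have "edge_boundary adj S \<subseteq> (\<lambda>(y, z). {y, z}) ` (SIGMA y:S. {z. adj y z})"
    by (force simp: edge_boundary_def)
  then show "finite (edge_boundary adj S)"
    using fin finite_subset by blast
qed

lemma singleton_in_finite_conn_sets: "{x} \<in> finite_conn_sets adj x"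
  by (auto simp: finite_conn_sets_def connected_vset_def)

lemma cutsets_V_nonempty: "cutsets_V adj x \<noteq> {}"
  and cutsets_E_nonempty: "cutsets_E adj x \<noteq> {}"
  using singleton_in_finite_conn_sets[of x adj] by (auto simp: cutsets_V_def cutsets_E_def)

lemma ex_edge_leaving_finite_set:
  assumes "finite S" and "x \<in> S" and "infinite (UNIV :: 'a set)"
    and "graph_connected adj"
  shows "\<exists>y\<in>S. \<exists>v. v \<notin> S \<and> adj y (v :: 'a)"
proof -
  obtain z where "z \<notin> S"
    using ex_new_if_finite assms(1,3) by blast
  moreover have "adj\<^sup>*\<^sup>* x z"
    using assms(4) by (simp add: graph_connected_def)
  moreover have "b \<in> S \<or> (\<exists>y\<in>S. \<exists>v. v \<notin> S \<and> adj y v)" if "adj\<^sup>*\<^sup>* x b" for b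
    using that by (induction rule: rtranclp_induct) (use assms(2) in auto)
  ultimately show ?thesis by blast
qed

lemma open_path_avoiding_outer_vboundary_cases:
  fixes adj :: "'a \<Rightarrow> 'a \<Rightarrow> bool" and \<omega> :: "'a set \<Rightarrow> bool" and S :: "'a set" and v :: 'a
  defines "R \<equiv> \<lambda>u w. adj u w \<and> \<omega> {u, w} \<and> u \<notin> outer_vboundary adj S - {v}
                      \<and> w \<notin> outer_vboundary adj S - {v}"
    and "R\<^sub>S \<equiv> \<lambda>u w. adj u w \<and> \<omega> {u, w} \<and> u \<in> S \<and> w \<in> S"
  assumes "R\<^sup>*\<^sup>* x b" and "x \<in> S"
  shows "(b \<in> S \<and> R\<^sub>S\<^sup>*\<^sup>* x b) \<or> (\<exists>y\<in>S. adj y v \<and> \<omega> {y, v} \<and> R\<^sub>S\<^sup>*\<^sup>* x y)"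
  using assms(3)
proof (induction rule: rtranclp_induct)
  case base
  then show ?case using \<open>x \<in> S\<close> by (simp add: R\<^sub>S_def)
next
  case (step b c)
  show ?case
  proof (cases "b \<in> S \<and> R\<^sub>S\<^sup>*\<^sup>* x b")
    case inside: True
    show ?thesis
    proof (cases "c \<in> S")
      case True
      then show ?thesis
        using inside step.hyps(2) by (auto simp: R_def R\<^sub>S_def intro: rtranclp.rtrancl_into_rtrancl)
    next
      case False
      then have "c \<in> outer_vboundary adj S"
        using inside step.hyps(2) by (auto simp: R_def outer_vboundary_def)
      then have "c = v"
        using step.hyps(2) by (auto simp: R_def)
      then show ?thesis
        using inside step.hyps(2) by (auto simp: R_def)
    qed
  next
    case False
    then show ?thesis using step.IH by blast
  qed
qed

lemma A_V_imp_A_E: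
  assumes "x \<in> S" and "v \<in> outer_vboundary adj S"
    and "A_V adj x v (outer_vboundary adj S) \<omega>"
  shows "\<exists>e\<in>edge_boundary adj S. v \<in> e \<and> A_E adj x e (edge_boundary adj S) \<omega>"
proof -
  let ?R\<^sub>S = "\<lambda>u w. adj u w \<and> \<omega> {u, w} \<and> u \<in> S \<and> w \<in> S"
  have "v \<notin> S"
    using assms(2) by (auto simp: outer_vboundary_def)
  with open_path_avoiding_outer_vboundary_cases[of adj \<omega> S v x v] assms(1,3)
  obtain y where y: "y \<in> S" "adj y v" "\<omega> {y, v}" "?R\<^sub>S\<^sup>*\<^sup>* x y"
    by (auto simp: A_V_def open_conn_avoid_V_def)
  let ?e = "{y, v}"
  have e: "?e \<in> edge_boundary adj S"
    using y \<open>v \<notin> S\<close> by (auto simp: edge_boundary_def)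
  have "open_conn_avoid_E adj \<omega> (edge_boundary adj S - {?e}) x y"
    unfolding open_conn_avoid_E_def
    by (rule mono_rtranclp[rule_format, OF _ y(4)])
      (auto simp: edge_boundary_def doubleton_eq_iff)
  then show ?thesis
    using e y by (auto simp: A_E_def)
qed

lemma prob_space_perc: "prob_space (perc adj p)"
  unfolding perc_def by (intro prob_space_PiM prob_space_measure_pmf)

lemma sets_perc_open_edge:
  assumes "e \<in> edges adj"
  shows "{\<omega> \<in> space (perc adj p). \<omega> e} \<in> sets (perc adj p)"
proof -
  have "(\<lambda>\<omega>. \<omega> e) \<in> measurable (perc adj p) (measure_pmf (bernoulli_pmf p))"
    unfolding perc_def using assms by (rule measurable_component_singleton)
  from measurable_sets[OF this, of "{True}"] show ?thesis
    by (simp add: vimage_def Int_def conj_commute)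
qed

lemma sets_perc_open_relpowp:
  assumes "locally_finite adj" and "\<And>u v. adj u v \<Longrightarrow> adj v u"
  shows "{\<omega> \<in> space (perc adj p). ((\<lambda>u w. adj u w \<and> \<omega> {u, w} \<and> Q u w) ^^ n) a b}
           \<in> sets (perc adj p)"
proof (induction n arbitrary: b)
  case 0
  show ?case by (cases "a = b") auto
next
  case (Suc n)
  let ?R = "\<lambda>\<omega> u w. adj u w \<and> \<omega> {u, w} \<and> Q u w"
  have "{\<omega> \<in> space (perc adj p). (?R \<omega> ^^ Suc n) a b} =
    (\<Union>y\<in>{y. adj y b \<and> Q y b}. {\<omega> \<in> space (perc adj p). (?R \<omega> ^^ n) a y}
                                \<inter> {\<omega> \<in> space (perc adj p). \<omega> {y, b}})"
    by (auto simp: relpowp_Suc_right)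
  moreover have "finite {y. adj y b \<and> Q y b}"
    using assms by (auto simp: locally_finite_def intro: finite_subset[of _ "{y. adj b y}"])
  moreover have "{\<omega> \<in> space (perc adj p). \<omega> {y, b}} \<in> sets (perc adj p)" if "adj y b" for y
    using that by (intro sets_perc_open_edge) (auto simp: edges_def)
  ultimately show ?case
    using Suc.IH by (auto intro: sets.finite_UN)
qed

lemma sets_perc_open_rtranclp:
  assumes "locally_finite adj" and "\<And>u v. adj u v \<Longrightarrow> adj v u"
  shows "{\<omega> \<in> space (perc adj p). (\<lambda>u w. adj u w \<and> \<omega> {u, w} \<and> Q u w)\<^sup>*\<^sup>* a b}
           \<in> sets (perc adj p)"
proof -
  have "{\<omega> \<in> space (perc adj p). (\<lambda>u w. adj u w \<and> \<omega> {u, w} \<and> Q u w)\<^sup>*\<^sup>* a b} =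
     (\<Union>n. {\<omega> \<in> space (perc adj p). ((\<lambda>u w. adj u w \<and> \<omega> {u, w} \<and> Q u w) ^^ n) a b})"
    by (auto dest: rtranclp_imp_relpowp intro: relpowp_imp_rtranclp)
  then show ?thesis
    using sets_perc_open_relpowp[OF assms] by simp
qed

lemma sets_perc_A_V:
  assumes "locally_finite adj" and "\<And>u v. adj u v \<Longrightarrow> adj v u"
  shows "{\<omega> \<in> space (perc adj p). A_V adj x v W \<omega>} \<in> sets (perc adj p)"
proof (cases "x \<in> W - {v}")
  case True
  then show ?thesis by (simp add: A_V_def open_conn_avoid_V_def)
next
  case False
  then show ?thesis
    using sets_perc_open_rtranclp[OF assms, of p "\<lambda>u w. u \<notin> W - {v} \<and> w \<notin> W - {v}" x v]
    by (simp add: A_V_def open_conn_avoid_V_def)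
qed

lemma sets_perc_A_E:
  assumes "locally_finite adj" and "\<And>u v. adj u v \<Longrightarrow> adj v u"
    and "e \<in> edges adj"
  shows "{\<omega> \<in> space (perc adj p). A_E adj x e F \<omega>} \<in> sets (perc adj p)"
proof -
  have "{\<omega> \<in> space (perc adj p). A_E adj x e F \<omega>} =
    {\<omega> \<in> space (perc adj p). \<omega> e} \<inter> (\<Union>y\<in>e.
      {\<omega> \<in> space (perc adj p). (\<lambda>u w. adj u w \<and> \<omega> {u, w} \<and> {u, w} \<notin> F - {e})\<^sup>*\<^sup>* x y})"
    by (auto simp: A_E_def open_conn_avoid_E_def)
  moreover have "finite e"
    using assms(3) by (auto simp: edges_def)
  ultimately show ?thesis
    by (simp only:) (intro sets.Int sets_perc_open_edge[OF assms(3)] sets.finite_UN ballI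
        sets_perc_open_rtranclp[OF assms(1,2)])
qed

lemma cutset_sum_V_le_E:
  assumes "locally_finite adj" and "\<And>u v. adj u v \<Longrightarrow> adj v u"
    and "finite S" and "x \<in> S"
  shows "cutset_sum_V adj x p (outer_vboundary adj S) \<le> cutset_sum_E adj x p (edge_boundary adj S)"
proof -
  interpret prob_space "perc adj p" by (rule prob_space_perc)
  let ?B = "outer_vboundary adj S" and ?D = "edge_boundary adj S"
  let ?A\<^sub>E = "\<lambda>e. {\<omega> \<in> space (perc adj p). A_E adj x e ?D \<omega>}"
  let ?P = "\<lambda>v. {e \<in> ?D. v \<in> e}"
  have fin: "finite ?B" "finite ?D"
    using finite_boundaries[OF assms(1,3)] by auto
  have events: "?A\<^sub>E ` ?P v \<subseteq> events" for v
    using sets_perc_A_E[OF assms(1,2)] edge_boundary_subset_edges by blast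
  have union_bound: "Prob_p adj p (A_V adj x v ?B) \<le> (\<Sum>e\<in>?P v. Prob_p adj p (A_E adj x e ?D))"
    if "v \<in> ?B" for v
  proof -
    have "{\<omega> \<in> space (perc adj p). A_V adj x v ?B \<omega>} \<subseteq> (\<Union>e\<in>?P v. ?A\<^sub>E e)"
      using A_V_imp_A_E[OF assms(4) that] by blast
    then have "Prob_p adj p (A_V adj x v ?B) \<le> prob (\<Union>e\<in>?P v. ?A\<^sub>E e)"
      unfolding Prob_p_def using events fin
      by (intro finite_measure_mono sets.finite_UN) auto
    also have "\<dots> \<le> (\<Sum>e\<in>?P v. prob (?A\<^sub>E e))"
      using events fin by (intro finite_measure_subadditive_finite) auto
    finally show ?thesis by (simp add: Prob_p_def)
  qed
  have "cutset_sum_V adj x p ?B \<le> (\<Sum>v\<in>?B. \<Sum>e\<in>?P v. Prob_p adj p (A_E adj x e ?D))"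
    unfolding cutset_sum_V_def using union_bound by (rule sum_mono)
  also have "\<dots> = (\<Sum>e\<in>(\<Union>v\<in>?B. ?P v). Prob_p adj p (A_E adj x e ?D))"
    using fin by (intro sum.UNION_disjoint[symmetric])
      (auto simp: outer_vboundary_def edge_boundary_def)
  also have "(\<Union>v\<in>?B. ?P v) = ?D"
    by (auto simp: outer_vboundary_def edge_boundary_def)
  finally show ?thesis
    unfolding cutset_sum_E_def .
qed

text \<open>\<^const>\<open>bernoulli_pmf\<close> clamps its parameter to \<open>[0, 1]\<close>.\<close>

lemma set_pmf_bernoulli_ge_1: "1 \<le> p \<Longrightarrow> set_pmf (bernoulli_pmf p) = {True}"
proof -
  interpret pmf_as_function .
  assume "1 \<le> p"
  then have "pmf (bernoulli_pmf p) False = 0" "pmf (bernoulli_pmf p) True \<noteq> 0"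
    by (transfer; simp)+
  then show ?thesis by (auto simp: set_pmf_iff) (metis (full_types))
qed

lemma set_pmf_bernoulli_le_0: "p \<le> 0 \<Longrightarrow> set_pmf (bernoulli_pmf p) = {False}"
proof -
  interpret pmf_as_function .
  assume "p \<le> 0"
  then have "pmf (bernoulli_pmf p) True = 0" "pmf (bernoulli_pmf p) False \<noteq> 0"
    by (transfer; simp)+
  then show ?thesis by (auto simp: set_pmf_iff)
qed

lemma AE_perc_edge:
  assumes "e \<in> edges adj" and "\<And>b. b \<in> set_pmf (bernoulli_pmf p) \<Longrightarrow> P b"
  shows "AE \<omega> in perc adj p. P (\<omega> e)"
  unfolding perc_def
  using assms by (intro AE_PiM_component prob_space_measure_pmf) (auto simp: AE_measure_pmf_iff)

lemma AE_perc_open_path: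
  assumes "1 \<le> p" and "(\<lambda>u w. adj u w \<and> Q u w)\<^sup>*\<^sup>* a b"
  shows "AE \<omega> in perc adj p. (\<lambda>u w. adj u w \<and> \<omega> {u, w} \<and> Q u w)\<^sup>*\<^sup>* a b"
  using assms(2)
proof (induction rule: rtranclp_induct)
  case base
  then show ?case by simp
next
  case (step b c)
  have "AE \<omega> in perc adj p. \<omega> {b, c}"
    using step.hyps(2) set_pmf_bernoulli_ge_1[OF assms(1)]
    by (intro AE_perc_edge) (auto simp: edges_def)
  with step.IH show ?case
    by eventually_elim (use step.hyps(2) in \<open>auto intro: rtranclp.rtrancl_into_rtrancl\<close>)
qed

lemma Prob_p_A_E_le_0:
  assumes "locally_finite adj" and "\<And>u v. adj u v \<Longrightarrow> adj v u"
    and "e \<in> edges adj" and "p \<le> 0"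
  shows "Prob_p adj p (A_E adj x e F) = 0"
proof -
  interpret prob_space "perc adj p" by (rule prob_space_perc)
  have "AE \<omega> in perc adj p. \<not> \<omega> e"
    using assms(3) set_pmf_bernoulli_le_0[OF assms(4)] by (intro AE_perc_edge) auto
  then have "AE \<omega> in perc adj p. \<omega> \<notin> {\<omega> \<in> space (perc adj p). A_E adj x e F \<omega>}"
    by eventually_elim (auto simp: A_E_def)
  then show ?thesis
    unfolding Prob_p_def using prob_eq_0[OF sets_perc_A_E[OF assms(1-3)]] by simp
qed

lemma cutset_sum_V_ge_1:
  assumes "locally_finite adj" and "\<And>u v. adj u v \<Longrightarrow> adj v u"
    and "infinite (UNIV :: 'a set)" and "graph_connected adj"
    and "S \<in> finite_conn_sets adj (x :: 'a)" and "1 \<le> p"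
  shows "1 \<le> cutset_sum_V adj x p (outer_vboundary adj S)"
proof -
  interpret prob_space "perc adj p" by (rule prob_space_perc)
  let ?B = "outer_vboundary adj S"
  have "finite S" and "x \<in> S" and "connected_vset adj S"
    using assms(5) by (auto simp: finite_conn_sets_def)
  obtain y v where y: "y \<in> S" "v \<notin> S" "adj y v"
    using ex_edge_leaving_finite_set[OF \<open>finite S\<close> \<open>x \<in> S\<close> assms(3,4)] by blast
  then have "v \<in> ?B"
    by (auto simp: outer_vboundary_def)
  let ?W = "?B - {v}"
  have "(\<lambda>a b. adj a b \<and> a \<in> S \<and> b \<in> S)\<^sup>*\<^sup>* x y"
    using \<open>connected_vset adj S\<close> \<open>x \<in> S\<close> y(1) by (simp add: connected_vset_def)
  then have "(\<lambda>u w. adj u w \<and> u \<notin> ?W \<and> w \<notin> ?W)\<^sup>*\<^sup>* x y"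
    by (rule mono_rtranclp[rule_format, rotated]) (auto simp: outer_vboundary_def)
  moreover have "y \<notin> ?W" and "v \<notin> ?W"
    using y by (auto simp: outer_vboundary_def)
  ultimately have "(\<lambda>u w. adj u w \<and> u \<notin> ?W \<and> w \<notin> ?W)\<^sup>*\<^sup>* x v"
    using y(3) by (auto intro: rtranclp.rtrancl_into_rtrancl)
  from AE_perc_open_path[OF assms(6) this] have "AE \<omega> in perc adj p. A_V adj x v ?B \<omega>"
    using \<open>x \<in> S\<close> by (auto simp: A_V_def open_conn_avoid_V_def outer_vboundary_def)
  then have "Prob_p adj p (A_V adj x v ?B) = 1"
    unfolding Prob_p_def using prob_Collect_eq_1[OF sets_perc_A_V[OF assms(1,2)]] by simp
  moreover have "Prob_p adj p (A_V adj x v ?B) \<le> cutset_sum_V adj x p ?B"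
    unfolding cutset_sum_V_def using \<open>v \<in> ?B\<close> finite_outer_vboundary[OF assms(1) \<open>finite S\<close>]
    by (intro member_le_sum) (auto simp: Prob_p_def)
  ultimately show ?thesis by simp
qed

lemma INF_cutset_sum_V_nonneg: "0 \<le> (INF CV\<in>cutsets_V adj x. cutset_sum_V adj x p CV)"
  by (intro cINF_greatest cutsets_V_nonempty) (auto simp: cutset_sum_V_def Prob_p_def intro: sum_nonneg)

lemma INF_cutset_sum_V_le_E:
  assumes "locally_finite adj" and "\<And>u v. adj u v \<Longrightarrow> adj v u"
  shows "(INF CV\<in>cutsets_V adj x. cutset_sum_V adj x p CV)
           \<le> (INF CE\<in>cutsets_E adj x. cutset_sum_E adj x p CE)"
proof (rule cINF_greatest[OF cutsets_E_nonempty])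
  fix CE assume "CE \<in> cutsets_E adj x"
  then obtain S where S: "S \<in> finite_conn_sets adj x" and CE: "CE = edge_boundary adj S"
    by (auto simp: cutsets_E_def)
  have "bdd_below (cutset_sum_V adj x p ` cutsets_V adj x)"
    by (intro bdd_belowI[of _ 0]) (auto simp: cutset_sum_V_def Prob_p_def intro: sum_nonneg)
  then have "(INF CV\<in>cutsets_V adj x. cutset_sum_V adj x p CV)
               \<le> cutset_sum_V adj x p (outer_vboundary adj S)"
    using S by (intro cINF_lower) (auto simp: cutsets_V_def)
  also have "\<dots> \<le> cutset_sum_E adj x p CE"
    unfolding CE using S assms by (intro cutset_sum_V_le_E) (auto simp: finite_conn_sets_def)
  finally show "(INF CV\<in>cutsets_V adj x. cutset_sum_V adj x p CV) \<le> cutset_sum_E adj x p CE" .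
qed

lemma INF_cutset_sum_E_0:
  assumes "locally_finite adj" and "\<And>u v. adj u v \<Longrightarrow> adj v u"
  shows "(INF CE\<in>cutsets_E adj x. cutset_sum_E adj x 0 CE) = 0"
proof -
  have "cutset_sum_E adj x 0 CE = 0" if "CE \<in> cutsets_E adj x" for CE
    using that edge_boundary_subset_edges
    by (auto simp: cutset_sum_E_def cutsets_E_def intro!: sum.neutral Prob_p_A_E_le_0[OF assms])
  then have "(INF CE\<in>cutsets_E adj x. cutset_sum_E adj x 0 CE) = (INF CE\<in>cutsets_E adj x. 0)"
    by (rule INF_cong[OF refl])
  then show ?thesis
    using cutsets_E_nonempty[of adj x] by simp
qed

lemma INF_cutset_sum_V_ge_1:
  assumes "locally_finite adj" and "\<And>u v. adj u v \<Longrightarrow> adj v u"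
    and "infinite (UNIV :: 'a set)" and "graph_connected adj" and "1 \<le> p"
  shows "1 \<le> (INF CV\<in>cutsets_V adj (x :: 'a). cutset_sum_V adj x p CV)"
  using cutset_sum_V_ge_1[OF assms(1-4) _ assms(5)]
  by (intro cINF_greatest cutsets_V_nonempty) (auto simp: cutsets_V_def)

theorem lemma2p10:
  fixes adj :: "'a \<Rightarrow> 'a \<Rightarrow> bool" and x :: 'a
  assumes "\<And>u v. adj u v \<Longrightarrow> adj v u"
    and "\<And>u. \<not> adj u u"
    and "locally_finite adj"
    and "graph_connected adj"
    and "infinite (UNIV :: 'a set)"
  shows "p_cut_E adj x \<le> p_cut_V adj x"
proof -
  note adj_sym = assms(1) and adj_locally_finite = assms(3)
  let ?P\<^sub>E = "{p. p \<ge> 0 \<and> (INF CE\<in>cutsets_E adj x. cutset_sum_E adj x p CE) = 0}"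
  let ?P\<^sub>V = "{p. p \<ge> 0 \<and> (INF CV\<in>cutsets_V adj x. cutset_sum_V adj x p CV) = 0}"
  have "?P\<^sub>E \<subseteq> ?P\<^sub>V"
  proof
    fix p assume "p \<in> ?P\<^sub>E"
    with INF_cutset_sum_V_le_E[of adj x p, OF adj_locally_finite adj_sym]
      INF_cutset_sum_V_nonneg[of adj x p]
    show "p \<in> ?P\<^sub>V" by simp
  qed
  moreover have "0 \<in> ?P\<^sub>E"
    using INF_cutset_sum_E_0[of adj x, OF adj_locally_finite adj_sym] by simp
  moreover have "bdd_above ?P\<^sub>V"
  proof (rule bdd_aboveI)
    fix p assume "p \<in> ?P\<^sub>V"
    with INF_cutset_sum_V_ge_1[of adj p x, OF adj_locally_finite adj_sym assms(5,4)]
    show "p \<le> 1" by fastforce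
  qed
  ultimately have "Sup ?P\<^sub>E \<le> Sup ?P\<^sub>V"
    by (intro cSup_subset_mono) auto
  then show ?thesis
    by (simp add: p_cut_E_def p_cut_V_def cutset_sum_E_def cutset_sum_V_def)
qed

end
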